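(* Let $H:[0,1]\times\mathbb R\to\mathbb R$ be continuous, coercive in $p$, and quasiconvex in $p$ with $\mathrm{Int}\{p: H(s,p)\le b\}=\{p:H(s,p)<b\}$ for all $s,b$. Let $a_H=\max_{s}\min_{p}H(s,p)$, let $a\ge a_H$, and if $a=a_H$ assume that $s\mapsto\min_pH(s,p)$ is constant on $[0,1]$. Let $\sigma^+_a(s)=\max\{p:H(s,p)=a\}$. Let $w$ be continuous on $[0,1]$ and a viscosity solution of $H(s,w'(s))=a$ in $(0,1)$. Then the following are equivalent: (1) $H(1,\varphi'(1))\ge a$ for every $\varphi\in C^1([0,1])$ that is a constrained subtangent to $w$ at $1$, i.e. $\varphi(1)=w(1)$ and $w\ge\varphi$ on $(1-\delta,1)$ for some $\delta>0$; (2) $w(s)=w(0)+\int_0^s\sigma^+_a(t)\,dt$ for all $s\in[0,1]$ (i.e. $w$ is the maximal subsolution of $H(s,u')=a$ in $(0,1)$ taking the value $w(0)$ at $0$).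
   Context: Coercive in $p$ means $H(s,p)\to+\infty$ as $|p|\to\infty$ uniformly in $s$; quasiconvex means convex sublevel sets in $p$. Sub/solutions are in the viscosity sense. *)

theory Defs
  imports "HOL-Analysis.Analysis"
begin

definition C1_open :: "(real \<Rightarrow> real) \<Rightarrow> (real \<Rightarrow> real) \<Rightarrow> bool" where
  "C1_open phi dphi \<longleftrightarrow>
     (\<forall>x\<in>{0<..<1}. (phi has_real_derivative dphi x) (at x)) \<and> continuous_on {0<..<1} dphi"

definition C1_closed :: "(real \<Rightarrow> real) \<Rightarrow> (real \<Rightarrow> real) \<Rightarrow> bool" where
  "C1_closed phi dphi \<longleftrightarrow>
     (\<forall>x\<in>{0..1}. (phi has_real_derivative dphi x) (at x within {0..1})) \<and> continuous_on {0..1} dphi"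

definition visc_sub :: "(real \<Rightarrow> real \<Rightarrow> real) \<Rightarrow> real \<Rightarrow> (real \<Rightarrow> real) \<Rightarrow> bool" where
  "visc_sub H a w \<longleftrightarrow>
     (\<forall>x\<in>{0<..<1}. \<forall>phi dphi. C1_open phi dphi \<and>
        (\<exists>e>0. \<forall>y\<in>{0<..<1}. \<bar>y - x\<bar> < e \<longrightarrow> w y - phi y \<le> w x - phi x)
        \<longrightarrow> H x (dphi x) \<le> a)"

definition visc_super :: "(real \<Rightarrow> real \<Rightarrow> real) \<Rightarrow> real \<Rightarrow> (real \<Rightarrow> real) \<Rightarrow> bool" where
  "visc_super H a w \<longleftrightarrow>
     (\<forall>x\<in>{0<..<1}. \<forall>phi dphi. C1_open phi dphi \<and>
        (\<exists>e>0. \<forall>y\<in>{0<..<1}. \<bar>y - x\<bar> < e \<longrightarrow> w y - phi y \<ge> w x - phi x)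
        \<longrightarrow> H x (dphi x) \<ge> a)"

definition visc_sol :: "(real \<Rightarrow> real \<Rightarrow> real) \<Rightarrow> real \<Rightarrow> (real \<Rightarrow> real) \<Rightarrow> bool" where
  "visc_sol H a w \<longleftrightarrow> visc_sub H a w \<and> visc_super H a w"

definition minH :: "(real \<Rightarrow> real \<Rightarrow> real) \<Rightarrow> real \<Rightarrow> real" where
  "minH H s = Inf (range (H s))"

definition aH :: "(real \<Rightarrow> real \<Rightarrow> real) \<Rightarrow> real" where
  "aH H = Sup (minH H ` {0..1})"

definition sigma_plus :: "(real \<Rightarrow> real \<Rightarrow> real) \<Rightarrow> real \<Rightarrow> real \<Rightarrow> real" where
  "sigma_plus H a s = Sup {p. H s p = a}"

end

theory Submission
  imports Defs
begin

text \<open>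
  Every slice \<open>H(s,\<cdot>)\<close> is coercive, quasiconvex and has no flat pieces, so its sublevel set
  \<open>{p. H(s,p) \<le> a}\<close> is the interval \<open>[\<sigma>\<^sup>-\<^sub>a(s), \<sigma>\<^sup>+\<^sub>a(s)]\<close> and its strict sublevel set is the open
  interval; under the hypotheses on \<open>a\<close> the endpoint \<open>\<sigma>\<^sup>+\<^sub>a\<close> is continuous. Let \<open>W\<close> be its
  primitive. Quadratic test functions show that a viscosity subsolution grows no faster than
  \<open>\<sigma>\<^sup>+\<^sub>a\<close>, i.e. \<open>w - W\<close> is nonincreasing. If \<open>w = w(0) + W\<close>, a constrained subtangent at \<open>1\<close> has
  slope at least \<open>\<sigma>\<^sup>+\<^sub>a(1)\<close>, so \<open>H \<ge> a\<close> there. Conversely, if \<open>min H(s,\<cdot>) = a\<close> everywhere then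
  \<open>H(s,p) > a\<close> also for \<open>p < \<sigma>\<^sup>+\<^sub>a(s)\<close>, and reflecting \<open>s \<mapsto> 1 - s\<close> shows that \<open>w - W\<close> is also
  nondecreasing. If \<open>min H(s,\<cdot>) < a\<close> everywhere and \<open>w - W\<close> drops, the supersolution property
  applied to \<open>W - \<epsilon>s\<close> keeps \<open>w\<close> above a line through \<open>(1, w(1))\<close> of slope \<open>\<sigma>\<^sup>+\<^sub>a(1) - \<epsilon>/2\<close>,
  a constrained subtangent with \<open>H < a\<close>.
\<close>

section \<open>Level sets of coercive quasiconvex functions\<close>

locale coercive_quasiconvex =
  fixes f :: "real \<Rightarrow> real"
  assumes continuous: "continuous_on UNIV f"
    and coercive: "\<And>M. \<exists>R. \<forall>p. R \<le> \<bar>p\<bar> \<longrightarrow> M \<le> f p"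
    and convex_sublevel: "\<And>b. convex {p. f p \<le> b}"
    and interior_sublevel: "\<And>b. interior {p. f p \<le> b} = {p. f p < b}"
begin

lemma attains_min: "\<exists>m. \<forall>p. f m \<le> f p"
proof -
  obtain R where R: "\<And>p. R \<le> \<bar>p\<bar> \<Longrightarrow> f 0 \<le> f p" using coercive by blast
  obtain m where m: "m \<in> {-\<bar>R\<bar>..\<bar>R\<bar>}" "\<And>p. p \<in> {-\<bar>R\<bar>..\<bar>R\<bar>} \<Longrightarrow> f m \<le> f p"
    using continuous_attains_inf[of "{-\<bar>R\<bar>..\<bar>R\<bar>}" f] continuous_on_subset[OF continuous] by auto
  have "f m \<le> f p" for p
    using R[of p] m(2)[of p] m(2)[of 0] by (cases "R \<le> \<bar>p\<bar>") (auto simp: not_le abs_less_iff)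
  then show ?thesis by blast
qed

lemma Inf_range_attained: "\<exists>m. f m = Inf (range f) \<and> (\<forall>p. f m \<le> f p)"
  using attains_min by (metis cInf_eq_minimum rangeE range_eqI)

lemma exists_level_above:
  assumes "f p \<le> a" shows "\<exists>q\<ge>p. f q = a"
proof -
  obtain R where R: "\<And>q. R \<le> \<bar>q\<bar> \<Longrightarrow> a \<le> f q" using coercive by blast
  have "a \<le> f (\<bar>p\<bar> + \<bar>R\<bar>)" by (rule R) auto
  then show ?thesis
    using IVT'[of f p a "\<bar>p\<bar> + \<bar>R\<bar>"] assms continuous_on_subset[OF continuous] by fastforce
qed

lemma exists_level_below:
  assumes "f p \<le> a" shows "\<exists>q\<le>p. f q = a"
proof -
  obtain R where R: "\<And>q. R \<le> \<bar>q\<bar> \<Longrightarrow> a \<le> f q" using coercive by blast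
  have "a \<le> f (- \<bar>p\<bar> - \<bar>R\<bar>)" by (rule R) auto
  then show ?thesis
    using IVT2'[of f p a "- \<bar>p\<bar> - \<bar>R\<bar>"] assms continuous_on_subset[OF continuous] by fastforce
qed

context
  fixes a :: real
  assumes min_le_level: "Inf (range f) \<le> a"
begin

lemma level_set_compact: "compact {p. f p = a}"
proof (rule compact_eq_bounded_closed[THEN iffD2, OF conjI])
  obtain R where "\<And>q. R \<le> \<bar>q\<bar> \<Longrightarrow> a + 1 \<le> f q" using coercive by blast
  then have "{p. f p = a} \<subseteq> cball 0 \<bar>R\<bar>"
    by (auto simp: dist_real_def) (smt (verit))
  then show "bounded {p. f p = a}" using bounded_cball bounded_subset by blast
  show "closed {p. f p = a}"
    using continuous_closed_preimage_constant[OF continuous closed_UNIV] by (simp add: vimage_def)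
qed

lemma level_set_nonempty: "{p. f p = a} \<noteq> {}"
proof -
  obtain m where "f m = Inf (range f)" using Inf_range_attained by blast
  then show ?thesis using exists_level_above[of m] min_le_level by auto
qed

lemma Sup_level: "f (Sup {p. f p = a}) = a"
  using closed_contains_Sup[OF level_set_nonempty] level_set_compact
  by (simp add: compact_imp_closed compact_imp_bounded bounded_imp_bdd_above)

lemma Inf_level: "f (Inf {p. f p = a}) = a"
  using closed_contains_Inf[OF level_set_nonempty] level_set_compact
  by (simp add: compact_imp_closed compact_imp_bounded bounded_imp_bdd_below)

lemma sublevel_eq_interval: "{p. f p \<le> a} = {Inf {p. f p = a}..Sup {p. f p = a}}"
proof
  have bdd: "bdd_above {p. f p = a}" "bdd_below {p. f p = a}"
    using level_set_compact by (simp_all add: compact_imp_bounded bounded_imp_bdd_above bounded_imp_bdd_below)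
  show "{p. f p \<le> a} \<subseteq> {Inf {p. f p = a}..Sup {p. f p = a}}"
  proof
    fix p assume "p \<in> {p. f p \<le> a}"
    then obtain q r where "p \<le> q" "f q = a" "r \<le> p" "f r = a"
      using exists_level_above exists_level_below by fastforce
    then show "p \<in> {Inf {p. f p = a}..Sup {p. f p = a}}"
      using cSup_upper[OF _ bdd(1), of q] cInf_lower[OF _ bdd(2), of r] by auto
  qed
  have "closed_segment (Inf {p. f p = a}) (Sup {p. f p = a}) \<subseteq> {p. f p \<le> a}"
    using convex_sublevel Inf_level Sup_level by (simp add: closed_segment_subset)
  then show "{Inf {p. f p = a}..Sup {p. f p = a}} \<subseteq> {p. f p \<le> a}"
    by (auto simp: closed_segment_eq_real_ivl split: if_splits)
qed

lemma strict_sublevel_eq_interval: "{p. f p < a} = {Inf {p. f p = a}<..<Sup {p. f p = a}}"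
  by (metis interior_sublevel sublevel_eq_interval interior_atLeastAtMost_real)

end

end

section \<open>Hamiltonians on \<open>[0,1] \<times> \<real>\<close> and continuity of \<open>\<sigma>\<^sup>+\<^sub>a\<close>\<close>

definition sigma_minus :: "(real \<Rightarrow> real \<Rightarrow> real) \<Rightarrow> real \<Rightarrow> real \<Rightarrow> real" where
  "sigma_minus H a s = Inf {p. H s p = a}"

lemma minH_reflect: "minH (\<lambda>s p. H s (- p)) s = minH H s"
proof -
  have "range (\<lambda>p. H s (- p)) = range (H s)"
    by (auto simp: image_iff) (metis minus_minus)
  then show ?thesis unfolding minH_def by simp
qed

lemma sigma_minus_reflect: "sigma_minus H a s = - sigma_plus (\<lambda>s p. H s (- p)) a s"
proof -
  have "{p. H s (- p) = a} = uminus ` {p. H s p = a}"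
    by (auto simp: image_iff) (metis minus_minus)
  then show ?thesis unfolding sigma_minus_def sigma_plus_def by (simp add: Inf_real_def)
qed

locale hamiltonian =
  fixes H :: "real \<Rightarrow> real \<Rightarrow> real"
  assumes continuous: "continuous_on ({0..1} \<times> UNIV) (\<lambda>(s, p). H s p)"
    and coercive: "\<And>M. \<exists>R. \<forall>s\<in>{0..1}. \<forall>p. R \<le> \<bar>p\<bar> \<longrightarrow> M \<le> H s p"
    and convex_sublevel: "\<And>s b. s \<in> {0..1} \<Longrightarrow> convex {p. H s p \<le> b}"
    and interior_sublevel: "\<And>s b. s \<in> {0..1} \<Longrightarrow> interior {p. H s p \<le> b} = {p. H s p < b}"
begin

lemma continuous_on_slice: "s \<in> {0..1} \<Longrightarrow> continuous_on UNIV (H s)"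
  by (rule continuous_on_compose_Pair[OF continuous]) (auto intro: continuous_intros)

lemma continuous_on_fixed_p: "continuous_on {0..1} (\<lambda>s. H s p)"
  by (rule continuous_on_compose_Pair[OF continuous]) (auto intro: continuous_intros)

lemma slice: "s \<in> {0..1} \<Longrightarrow> coercive_quasiconvex (H s)"
  by unfold_locales (use continuous_on_slice coercive convex_sublevel interior_sublevel in blast)+

lemma hamiltonian_reflect: "hamiltonian (\<lambda>s p. H s (- p))"
proof
  have "continuous_on ({0..1} \<times> UNIV) (\<lambda>z. (\<lambda>(s, p). H s p) (fst z, - snd z))"
    by (rule continuous_on_compose2[OF continuous]) (auto intro!: continuous_intros)
  then show "continuous_on ({0..1} \<times> UNIV) (\<lambda>(s, p). H s (- p))"
    by (simp add: case_prod_beta)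
  show "\<exists>R. \<forall>s\<in>{0..1}. \<forall>p. R \<le> \<bar>p\<bar> \<longrightarrow> M \<le> H s (- p)" for M
    using coercive[of M] by (metis abs_minus_cancel)
  fix s b :: real assume s: "s \<in> {0..1}"
  have reflect: "{p. H s (- p) \<le> b} = uminus ` {p. H s p \<le> b}"
    "{p. H s (- p) < b} = uminus ` {p. H s p < b}"
    by (auto simp: image_iff) (metis minus_minus)+
  show "convex {p. H s (- p) \<le> b}"
    unfolding reflect by (rule convex_negations[OF convex_sublevel[OF s]])
  show "interior {p. H s (- p) \<le> b} = {p. H s (- p) < b}"
    unfolding reflect interior_negations interior_sublevel[OF s] ..
qed

lemma minH_le_H: "s \<in> {0..1} \<Longrightarrow> minH H s \<le> H s p"
  unfolding minH_def using coercive_quasiconvex.Inf_range_attained[OF slice]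
  by (metis cInf_lower bdd_belowI2 range_eqI)

context
  fixes s a :: real
  assumes s: "s \<in> {0..1}" and minH_le: "minH H s \<le> a"
begin

lemma sublevel_eq: "{p. H s p \<le> a} = {sigma_minus H a s..sigma_plus H a s}"
  using coercive_quasiconvex.sublevel_eq_interval[OF slice[OF s]] minH_le
  unfolding minH_def sigma_minus_def sigma_plus_def by blast

lemma strict_sublevel_eq: "{p. H s p < a} = {sigma_minus H a s<..<sigma_plus H a s}"
  using coercive_quasiconvex.strict_sublevel_eq_interval[OF slice[OF s]] minH_le
  unfolding minH_def sigma_minus_def sigma_plus_def by blast

lemma H_sigma_plus: "H s (sigma_plus H a s) = a"
  using coercive_quasiconvex.Sup_level[OF slice[OF s]] minH_le
  unfolding minH_def sigma_plus_def by blast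

lemma H_greater_above_sigma_plus: "sigma_plus H a s < p \<Longrightarrow> a < H s p"
  using sublevel_eq by (auto simp: not_le[symmetric])

lemma H_ge_at_or_above_sigma_plus: "sigma_plus H a s \<le> p \<Longrightarrow> a \<le> H s p"
  using strict_sublevel_eq by (auto simp: not_le[symmetric])

lemma sigma_minus_less_sigma_plus:
  assumes "minH H s < a" shows "sigma_minus H a s < sigma_plus H a s"
proof -
  obtain m where "H s m = minH H s"
    using coercive_quasiconvex.Inf_range_attained[OF slice[OF s]] unfolding minH_def by blast
  then have "m \<in> {p. H s p < a}" using assms by simp
  then show ?thesis unfolding strict_sublevel_eq by simp
qed

lemma sigma_minus_eq_sigma_plus:
  assumes "minH H s = a" shows "sigma_minus H a s = sigma_plus H a s"
proof -
  have "{p. H s p < a} = {}" using minH_le_H[OF s] assms by (auto simp: not_less)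
  moreover have "sigma_plus H a s \<in> {p. H s p \<le> a}" using H_sigma_plus by simp
  ultimately show ?thesis unfolding strict_sublevel_eq sublevel_eq
    by (metis atLeastAtMost_iff greaterThanLessThan_empty_iff order.antisym)
qed

end

lemma H_greater_below_sigma_plus_degenerate:
  assumes s: "s \<in> {0..1}" and degenerate: "minH H s = a" and "p < sigma_plus H a s"
  shows "a < H s p"
proof (rule ccontr)
  assume "\<not> a < H s p"
  then have "p \<in> {p. H s p \<le> a}" by simp
  then have "p \<in> {sigma_minus H a s..sigma_plus H a s}"
    using sublevel_eq[OF s, of a] degenerate by simp
  then show False using sigma_minus_eq_sigma_plus[OF s _ degenerate] degenerate assms(3) by simp
qed

lemma eventually_above_level:
  assumes s0: "s0 \<in> {0..1}" and above: "\<And>q. p \<le> q \<Longrightarrow> a < H s0 q"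
  shows "\<forall>\<^sub>F s in at s0 within {0..1}. \<forall>q\<ge>p. a < H s q"
proof -
  obtain R where R: "\<And>s q. s \<in> {0..1} \<Longrightarrow> R \<le> \<bar>q\<bar> \<Longrightarrow> a + 1 \<le> H s q"
    using coercive by blast
  \<comment> \<open>The bad points of a compact box form a compact set whose projection is closed and misses \<open>s0\<close>.\<close>
  define K where "K = {0..1::real} \<times> {p..\<bar>R\<bar> + \<bar>p\<bar>}"
  define C where "C = {z \<in> K. H (fst z) (snd z) \<le> a}"
  have "compact C"
  proof -
    have "continuous_on K (\<lambda>z. H (fst z) (snd z))"
      using continuous_on_subset[OF continuous] unfolding K_def by (simp add: case_prod_beta subset_iff)
    then have "closed C"
      unfolding C_def K_def by (intro continuous_on_closed_Collect_le continuous_intros closed_Times) auto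
    moreover have "bounded C"
      by (rule bounded_subset[of K]) (auto simp: C_def K_def intro!: compact_imp_bounded compact_Times)
    ultimately show ?thesis by (simp add: compact_eq_bounded_closed)
  qed
  then have "closed (fst ` C)" by (intro compact_imp_closed compact_continuous_image continuous_intros)
  moreover have "s0 \<notin> fst ` C" using above unfolding C_def K_def by force
  ultimately have "\<forall>\<^sub>F s in at s0 within {0..1}. s \<notin> fst ` C \<and> s \<in> {0..1}"
    unfolding eventually_at_topological by (intro exI[of _ "- fst ` C"]) auto
  then show ?thesis
  proof (rule eventually_mono, intro allI impI)
    fix s q assume s: "s \<notin> fst ` C \<and> s \<in> {0..1}" and "p \<le> q"
    show "a < H s q"
    proof (cases "q \<le> \<bar>R\<bar> + \<bar>p\<bar>")
      case True
      then have "(s, q) \<in> K - C" using s \<open>p \<le> q\<close> unfolding K_def C_def by force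
      then show ?thesis unfolding C_def by auto
    next
      case False
      then have "R \<le> \<bar>q\<bar>" by arith
      then show ?thesis using R[of s q] s by simp
    qed
  qed
qed

context
  fixes a :: real
  assumes admissible: "\<And>s. s \<in> {0..1} \<Longrightarrow> minH H s \<le> a"
begin

lemma sigma_plus_usc:
  assumes s0: "s0 \<in> {0..1}" and "sigma_plus H a s0 < c"
  shows "\<forall>\<^sub>F s in at s0 within {0..1}. sigma_plus H a s < c"
proof -
  have "\<forall>\<^sub>F s in at s0 within {0..1}. s \<in> {0..1} \<and> (\<forall>q\<ge>c. a < H s q)"
    using eventually_above_level[OF s0] H_greater_above_sigma_plus[OF s0 admissible[OF s0]] assms(2)
    by (auto simp: eventually_at_filter)
  then show ?thesis
    by (rule eventually_mono) (metis H_sigma_plus admissible less_irrefl not_le)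
qed

lemma sigma_plus_lsc:
  assumes s0: "s0 \<in> {0..1}" and strict: "minH H s0 < a" and "c < sigma_plus H a s0"
  shows "\<forall>\<^sub>F s in at s0 within {0..1}. c < sigma_plus H a s"
proof -
  define q where "q = (max c (sigma_minus H a s0) + sigma_plus H a s0) / 2"
  have q: "c < q" "q < sigma_plus H a s0" "sigma_minus H a s0 < q"
    using assms(3) sigma_minus_less_sigma_plus[OF s0 admissible[OF s0] strict] unfolding q_def by auto
  then have "H s0 q < a" using strict_sublevel_eq[OF s0 admissible[OF s0]] by auto
  then have "\<forall>\<^sub>F s in at s0 within {0..1}. H s q < a"
    using continuous_on_fixed_p s0 by (metis continuous_on_eq_continuous_within continuous_within order_tendstoD(2))
  then have "\<forall>\<^sub>F s in at s0 within {0..1}. s \<in> {0..1} \<and> H s q < a"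
    by (auto simp: eventually_at_filter)
  then show ?thesis
  proof (rule eventually_mono)
    fix s assume "s \<in> {0..1} \<and> H s q < a"
    then have "q \<in> {sigma_minus H a s..sigma_plus H a s}"
      using sublevel_eq[of s a] admissible by auto
    then show "c < sigma_plus H a s" using q by simp
  qed
qed

lemma sigma_plus_continuous:
  assumes "(\<forall>s\<in>{0..1}. minH H s < a) \<or> (\<forall>s\<in>{0..1}. minH H s = a)"
  shows "continuous_on {0..1} (sigma_plus H a)"
  unfolding continuous_on_eq_continuous_within continuous_within
proof (intro ballI order_tendstoI)
  fix s0 c :: real assume s0: "s0 \<in> {0..1}"
  show "sigma_plus H a s0 < c \<Longrightarrow> \<forall>\<^sub>F s in at s0 within {0..1}. sigma_plus H a s < c"
    by (rule sigma_plus_usc[OF s0])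
  assume c: "c < sigma_plus H a s0"
  from assms show "\<forall>\<^sub>F s in at s0 within {0..1}. c < sigma_plus H a s"
  proof
    assume "\<forall>s\<in>{0..1}. minH H s < a"
    then show ?thesis using sigma_plus_lsc[OF s0 _ c] s0 by blast
  next
    assume degenerate: "\<forall>s\<in>{0..1}. minH H s = a"
    \<comment> \<open>Then \<open>\<sigma>\<^sup>+\<^sub>a = \<sigma>\<^sup>-\<^sub>a\<close>, which is upper semicontinuous after reflecting \<open>p \<mapsto> -p\<close>.\<close>
    interpret reflected: hamiltonian "\<lambda>s p. H s (- p)" by (rule hamiltonian_reflect)
    have "sigma_plus H a s = - sigma_plus (\<lambda>s p. H s (- p)) a s" if "s \<in> {0..1}" for s
      using sigma_minus_eq_sigma_plus[OF that] degenerate that by (simp add: sigma_minus_reflect)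
    moreover have "\<forall>\<^sub>F s in at s0 within {0..1}. sigma_plus (\<lambda>s p. H s (- p)) a s < - c"
      using reflected.sigma_plus_usc[OF _ s0] admissible s0 c calculation
      by (simp add: minH_reflect)
    ultimately show ?thesis
      by (auto simp: eventually_at_filter elim: eventually_mono)
  qed
qed

end

lemma sigma_minus_continuous:
  assumes "\<forall>s\<in>{0..1}. minH H s < a"
  shows "continuous_on {0..1} (sigma_minus H a)"
proof -
  interpret reflected: hamiltonian "\<lambda>s p. H s (- p)" by (rule hamiltonian_reflect)
  have "continuous_on {0..1} (sigma_plus (\<lambda>s p. H s (- p)) a)"
    by (rule reflected.sigma_plus_continuous) (use assms in \<open>auto simp: minH_reflect less_imp_le\<close>)
  then have "continuous_on {0..1} (\<lambda>s. - sigma_plus (\<lambda>s p. H s (- p)) a s)"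
    by (intro continuous_intros)
  then show ?thesis by (simp add: sigma_minus_reflect[abs_def])
qed

lemma uniform_gap_below_sigma_plus:
  assumes "\<forall>s\<in>{0..1}. minH H s < a"
  obtains \<eta> where "0 < \<eta>"
    "\<And>s p. s \<in> {0..1} \<Longrightarrow> sigma_plus H a s - \<eta> < p \<Longrightarrow> p < sigma_plus H a s \<Longrightarrow> H s p < a"
proof -
  have "continuous_on {0..1} (sigma_plus H a)"
    by (rule sigma_plus_continuous) (use assms in \<open>auto intro: less_imp_le\<close>)
  then have "continuous_on {0..1} (\<lambda>s. sigma_plus H a s - sigma_minus H a s)"
    using sigma_minus_continuous[OF assms] by (rule continuous_on_diff)
  then have "\<exists>s1\<in>{0..1}. \<forall>s\<in>{0..1}. sigma_plus H a s1 - sigma_minus H a s1 \<le> sigma_plus H a s - sigma_minus H a s"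
    by (intro continuous_attains_inf) auto
  then obtain s1 where s1: "s1 \<in> {0..1}"
    "\<And>s. s \<in> {0..1} \<Longrightarrow> sigma_plus H a s1 - sigma_minus H a s1 \<le> sigma_plus H a s - sigma_minus H a s"
    by blast
  show ?thesis
  proof (rule that)
    show "0 < sigma_plus H a s1 - sigma_minus H a s1"
      using sigma_minus_less_sigma_plus[OF s1(1)] assms s1(1) by auto
    fix s p assume "s \<in> {0..1}" "sigma_plus H a s - (sigma_plus H a s1 - sigma_minus H a s1) < p"
      "p < sigma_plus H a s"
    moreover have "sigma_minus H a s \<le> sigma_plus H a s - (sigma_plus H a s1 - sigma_minus H a s1)"
      using s1(2)[OF \<open>s \<in> {0..1}\<close>] by simp
    ultimately have "p \<in> {sigma_minus H a s<..<sigma_plus H a s}" by simp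
    also have "\<dots> = {p. H s p < a}"
      using strict_sublevel_eq[OF \<open>s \<in> {0..1}\<close>, of a] assms \<open>s \<in> {0..1}\<close> by (simp add: less_imp_le)
    finally show "H s p < a" by simp
  qed
qed

lemma minH_le_aH: "s \<in> {0..1} \<Longrightarrow> minH H s \<le> aH H"
proof -
  have "compact ((\<lambda>s. H s 0) ` {0..1})"
    by (intro compact_continuous_image continuous_on_fixed_p) auto
  then obtain M where "\<And>s. s \<in> {0..1} \<Longrightarrow> H s 0 \<le> M"
    by (meson bdd_above.E bounded_imp_bdd_above compact_imp_bounded imageI)
  then have "bdd_above (minH H ` {0..1})"
    by (meson bdd_aboveI2 minH_le_H order_trans)
  then show "s \<in> {0..1} \<Longrightarrow> minH H s \<le> aH H" unfolding aH_def by (simp add: cSup_upper)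
qed

lemma level_cases:
  assumes "aH H \<le> a" and "a = aH H \<longrightarrow> (\<exists>c. \<forall>s\<in>{0..1}. minH H s = c)"
  shows "(\<forall>s\<in>{0..1}. minH H s < a) \<or> (\<forall>s\<in>{0..1}. minH H s = a)"
proof (cases "a = aH H")
  case True
  then obtain c where c: "\<forall>s\<in>{0..1}. minH H s = c" using assms(2) by blast
  then have "minH H ` {0..1} = {c}" by (auto intro!: image_eqI[of c _ 0])
  then have "aH H = c" unfolding aH_def by simp
  then show ?thesis using c True by auto
next
  case False
  then have "aH H < a" using assms(1) by simp
  then show ?thesis using minH_le_aH by (blast intro: order.strict_trans1)
qed

end

section \<open>Test-function arguments\<close>

lemma continuous_attains_sup_interior:
  fixes f :: "real \<Rightarrow> real"
  assumes "continuous_on {\<alpha>..\<beta>} f" "\<alpha> < z" "z < \<beta>" "f \<alpha> < f z" "f \<beta> < f z"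
  obtains x where "x \<in> {\<alpha><..<\<beta>}" "\<And>y. y \<in> {\<alpha>..\<beta>} \<Longrightarrow> f y \<le> f x"
proof -
  obtain x where x: "x \<in> {\<alpha>..\<beta>}" "\<forall>y\<in>{\<alpha>..\<beta>}. f y \<le> f x"
    using continuous_attains_sup[OF compact_Icc _ assms(1)] assms(2,3) by auto
  moreover have "x \<noteq> \<alpha>" "x \<noteq> \<beta>" using x(2)[rule_format, of z] assms(2-5) by auto
  ultimately show ?thesis by (intro that[of x]) auto
qed

lemma visc_sub_interval_max:
  assumes "visc_sub H a w" "C1_open phi dphi" "0 \<le> \<alpha>" "\<beta> \<le> 1" "x \<in> {\<alpha><..<\<beta>}"
    and "\<And>y. y \<in> {\<alpha>..\<beta>} \<Longrightarrow> w y - phi y \<le> w x - phi x"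
  shows "H x (dphi x) \<le> a"
proof -
  have "\<forall>y\<in>{0<..<1}. \<bar>y - x\<bar> < min (x - \<alpha>) (\<beta> - x) \<longrightarrow> w y - phi y \<le> w x - phi x"
    using assms(5,6) by (auto simp: abs_less_iff)
  moreover have "x \<in> {0<..<1}" "0 < min (x - \<alpha>) (\<beta> - x)" using assms(3-5) by auto
  ultimately show ?thesis using assms(1,2) unfolding visc_sub_def by blast
qed

lemma visc_super_interval_min:
  assumes "visc_super H a w" "C1_open phi dphi" "0 \<le> \<alpha>" "\<beta> \<le> 1" "x \<in> {\<alpha><..<\<beta>}"
    and "\<And>y. y \<in> {\<alpha>..\<beta>} \<Longrightarrow> w x - phi x \<le> w y - phi y"
  shows "a \<le> H x (dphi x)"
proof -
  have "\<forall>y\<in>{0<..<1}. \<bar>y - x\<bar> < min (x - \<alpha>) (\<beta> - x) \<longrightarrow> w x - phi x \<le> w y - phi y"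
    using assms(5,6) by (auto simp: abs_less_iff)
  moreover have "x \<in> {0<..<1}" "0 < min (x - \<alpha>) (\<beta> - x)" using assms(3-5) by auto
  ultimately show ?thesis using assms(1,2) unfolding visc_super_def by blast
qed

lemma C1_open_reflect:
  assumes "C1_open phi dphi"
  shows "C1_open (\<lambda>x. phi (1 - x)) (\<lambda>x. - dphi (1 - x))"
  unfolding C1_open_def
proof (intro conjI ballI)
  fix x :: real assume "x \<in> {0<..<1}"
  then have "(phi has_real_derivative dphi (1 - x)) (at (1 - x))"
    using assms unfolding C1_open_def by simp
  from DERIV_chain2[OF this DERIV_diff[OF DERIV_const DERIV_ident]]
  show "((\<lambda>x. phi (1 - x)) has_real_derivative - dphi (1 - x)) (at x)" by simp
next
  have "continuous_on {0<..<1} (\<lambda>x. dphi (1 - x))"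
    by (rule continuous_on_compose2[of "{0<..<1}" dphi]) (use assms in \<open>auto simp: C1_open_def intro!: continuous_intros\<close>)
  then show "continuous_on {0<..<1} (\<lambda>x. - dphi (1 - x))" by (rule continuous_on_minus)
qed

lemma visc_sub_reflect:
  assumes "visc_sub H a w"
  shows "visc_sub (\<lambda>s p. H (1 - s) (- p)) a (\<lambda>s. w (1 - s))"
  unfolding visc_sub_def
proof (intro ballI allI impI, elim conjE exE)
  fix x phi dphi e
  assume x: "x \<in> {0<..<1}" and C1: "C1_open phi dphi" and e: "e > 0"
    and max: "\<forall>y\<in>{0<..<1}. \<bar>y - x\<bar> < e \<longrightarrow> w (1 - y) - phi y \<le> w (1 - x) - phi x"
  have "\<forall>y\<in>{0<..<1}. \<bar>y - (1 - x)\<bar> < e \<longrightarrow> w y - phi (1 - y) \<le> w (1 - x) - phi (1 - (1 - x))"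
    using max by (auto dest!: bspec[of _ _ "1 - _"])
  moreover have "1 - x \<in> {0<..<1}" using x by auto
  ultimately have "H (1 - x) (- dphi (1 - (1 - x))) \<le> a"
    using assms C1_open_reflect[OF C1] e unfolding visc_sub_def by blast
  then show "H (1 - x) (- dphi x) \<le> a" by simp
qed

lemma visc_sub_right_difference_le:
  assumes sub: "visc_sub H a w" and w: "continuous_on {0..1} w" and x0: "x0 \<in> {0<..<1}"
    and r: "0 < r" and above: "\<And>s q. s \<in> {0..1} \<Longrightarrow> \<bar>s - x0\<bar> < r \<Longrightarrow> p \<le> q \<Longrightarrow> a < H s q"
    and pq: "p < q"
  shows "\<exists>\<delta>>0. \<forall>h. 0 < h \<longrightarrow> h < \<delta> \<longrightarrow> w (x0 + h) - w x0 \<le> q * h"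
proof -
  define \<rho> where "\<rho> = min (r / 2) ((1 - x0) / 2)"
  have \<rho>: "0 < \<rho>" "\<rho> < r" "x0 + \<rho> < 1" using r x0 unfolding \<rho>_def by (auto simp: min_def field_simps)
  \<comment> \<open>\<open>K\<close> makes \<open>w - phi\<close> smaller at \<open>x0 + \<rho>\<close> than at \<open>x0\<close>; a faster rise of \<open>w\<close> would then
    produce an interior maximum where \<open>dphi \<ge> p\<close>.\<close>
  define K where "K = \<bar>w (x0 + \<rho>) - w x0 - p * \<rho>\<bar> / \<rho>\<^sup>2 + 1"
  define phi where "phi x = p * (x - x0) + K * (x - x0)\<^sup>2" for x
  have K: "0 < K" unfolding K_def by (simp add: add_nonneg_pos)
  have "K * \<rho>\<^sup>2 = \<bar>w (x0 + \<rho>) - w x0 - p * \<rho>\<bar> + \<rho>\<^sup>2" using \<rho>(1) by (simp add: K_def field_simps)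
  moreover have "w (x0 + \<rho>) - w x0 - p * \<rho> \<le> \<bar>w (x0 + \<rho>) - w x0 - p * \<rho>\<bar>" by (rule abs_ge_self)
  moreover have "0 < \<rho>\<^sup>2" "phi (x0 + \<rho>) = p * \<rho> + K * \<rho>\<^sup>2" "phi x0 = 0"
    using \<rho>(1) by (simp_all add: phi_def)
  ultimately have drop: "w (x0 + \<rho>) - phi (x0 + \<rho>) < w x0 - phi x0" by linarith
  have C1: "C1_open phi (\<lambda>x. p + 2 * K * (x - x0))"
    unfolding C1_open_def phi_def by (auto intro!: derivative_eq_intros continuous_intros simp: algebra_simps)
  define \<delta> where "\<delta> = min \<rho> ((q - p) / K)"
  show ?thesis
  proof (intro exI[of _ \<delta>] conjI allI impI)
    show "0 < \<delta>" using \<rho>(1) K pq unfolding \<delta>_def by simp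
    fix h assume h: "0 < h" "h < \<delta>"
    show "w (x0 + h) - w x0 \<le> q * h"
    proof (rule ccontr)
      assume "\<not> ?thesis"
      moreover have "0 < h * (q - p - K * h)"
        using h K unfolding \<delta>_def by (simp add: less_divide_eq mult.commute)
      ultimately have rise: "w x0 - phi x0 < w (x0 + h) - phi (x0 + h)"
        unfolding phi_def by (simp add: algebra_simps power2_eq_square)
      have "continuous_on {x0..x0 + \<rho>} (\<lambda>y. w y - phi y)"
        unfolding phi_def using x0 \<rho>
        by (intro continuous_intros continuous_on_subset[OF w]) auto
      then obtain x where x: "x \<in> {x0<..<x0 + \<rho>}" "\<And>y. y \<in> {x0..x0 + \<rho>} \<Longrightarrow> w y - phi y \<le> w x - phi x"
        by (rule continuous_attains_sup_interior[where z = "x0 + h"])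
          (use h rise drop in \<open>auto simp: \<delta>_def\<close>)
      have "H x (p + 2 * K * (x - x0)) \<le> a"
        by (rule visc_sub_interval_max[OF sub C1 _ _ x]) (use x0 \<rho> in auto)
      moreover have "a < H x (p + 2 * K * (x - x0))"
        using x x0 \<rho> K by (intro above) auto
      ultimately show False by simp
    qed
  qed
qed

lemma upper_right_dini_nonpos_imp_le:
  fixes g :: "real \<Rightarrow> real"
  assumes st: "s \<le> t" and g: "continuous_on {s..t} g"
    and dini: "\<And>x \<epsilon>. x \<in> {s<..<t} \<Longrightarrow> 0 < \<epsilon> \<Longrightarrow> \<exists>\<delta>>0. \<forall>h. 0 < h \<longrightarrow> h < \<delta> \<longrightarrow> g (x + h) \<le> g x + \<epsilon> * h"
  shows "g t \<le> g s"
proof (cases "s = t")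
  case False
  then have st: "s < t" using st by simp
  have approx: "g t \<le> g x + \<epsilon> * (t - x)" if x: "x \<in> {s<..<t}" and \<epsilon>: "0 < \<epsilon>" for x \<epsilon>
  proof -
    define S where "S = {y \<in> {x..t}. g y \<le> g x + \<epsilon> * (y - x)}"
    have "closed S"
      unfolding S_def using x by (intro continuous_on_closed_Collect_le continuous_intros
          continuous_on_subset[OF g]) auto
    moreover have "x \<in> S" "bdd_above S" using x unfolding S_def by (auto intro: bdd_aboveI2)
    ultimately have m: "Sup S \<in> S" using closed_contains_Sup by blast
    have "Sup S = t"
    proof (rule ccontr)
      assume "Sup S \<noteq> t"
      then have m_in: "Sup S \<in> {s<..<t}" using m x unfolding S_def by auto
      then obtain \<delta> where \<delta>: "0 < \<delta>" "\<And>h. 0 < h \<Longrightarrow> h < \<delta> \<Longrightarrow> g (Sup S + h) \<le> g (Sup S) + \<epsilon> * h"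
        using dini \<epsilon> by blast
      define h where "h = min \<delta> (t - Sup S) / 2"
      have h: "0 < h" "h < \<delta>" "Sup S + h \<le> t" using \<delta>(1) m_in unfolding h_def by (auto simp: min_def field_simps)
      have "g (Sup S + h) \<le> g x + \<epsilon> * (Sup S + h - x)"
        using \<delta>(2)[OF h(1,2)] m unfolding S_def by (simp add: algebra_simps)
      then have "Sup S + h \<in> S" using m h unfolding S_def by simp
      then show False using cSup_upper[OF _ \<open>bdd_above S\<close>] h(1) by fastforce
    qed
    then show ?thesis using m unfolding S_def by simp
  qed
  have "g t \<le> g x" if x: "x \<in> {s<..<t}" for x
  proof (rule field_le_epsilon)
    fix e :: real assume "0 < e"
    then show "g t \<le> g x + e" using approx[OF x, of "e / (t - x)"] x by simp
  qed
  then show ?thesis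
    using continuous_ge_on_closure[of "{s<..<t}" g s] g st by (simp add: closure_greaterThanLessThan)
qed simp

lemma DERIV_right_difference_gt:
  assumes "(f has_real_derivative D) (at x)" and "c < D"
  shows "\<exists>\<delta>>0. \<forall>h. 0 < h \<longrightarrow> h < \<delta> \<longrightarrow> c * h < f (x + h) - f x"
proof -
  have "((\<lambda>t. f t - c * t) has_real_derivative D - c) (at x)"
    using assms(1) by (auto intro!: derivative_eq_intros)
  moreover have "0 < D - c" using assms(2) by simp
  ultimately obtain \<delta> where "0 < \<delta>" "\<forall>h>0. h < \<delta> \<longrightarrow> f x - c * x < f (x + h) - c * (x + h)"
    using DERIV_pos_inc_right by blast
  then show ?thesis by (intro exI[of _ \<delta>]) (auto simp: algebra_simps)
qed

lemma visc_sub_increment_le: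
  assumes sub: "visc_sub H a w" and w: "continuous_on {0..1} w"
    and \<sigma>: "continuous_on {0..1} \<sigma>"
    and W: "continuous_on {0..1} W" "\<And>x. x \<in> {0<..<1} \<Longrightarrow> (W has_real_derivative \<sigma> x) (at x)"
    and above: "\<And>s p. s \<in> {0..1} \<Longrightarrow> \<sigma> s < p \<Longrightarrow> a < H s p"
    and xy: "0 \<le> x" "x \<le> y" "y \<le> 1"
  shows "w y - w x \<le> W y - W x"
proof -
  have "w y - W y \<le> w x - W x"
  proof (rule upper_right_dini_nonpos_imp_le[OF xy(2)])
    show "continuous_on {x..y} (\<lambda>t. w t - W t)"
      using xy by (intro continuous_intros continuous_on_subset[OF w] continuous_on_subset[OF W(1)]) auto
    fix z \<epsilon> :: real assume z: "z \<in> {x<..<y}" and \<epsilon>: "0 < \<epsilon>"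
    then have z01: "z \<in> {0<..<1}" using xy by auto
    have "z \<in> {0..1}" "0 < \<epsilon> / 4" using z01 \<epsilon> by auto
    then obtain r where r: "0 < r" "\<forall>s\<in>{0..1}. dist s z < r \<longrightarrow> dist (\<sigma> s) (\<sigma> z) < \<epsilon> / 4"
      using \<sigma> unfolding continuous_on_iff by blast
    have slope_above: "a < H s q" if "s \<in> {0..1}" "\<bar>s - z\<bar> < r" "\<sigma> z + \<epsilon> / 4 \<le> q" for s q
    proof -
      have "dist (\<sigma> s) (\<sigma> z) < \<epsilon> / 4" using r(2) that(1,2) by (simp add: dist_real_def)
      then have "\<sigma> s < \<sigma> z + \<epsilon> / 4" unfolding dist_real_def abs_less_iff by linarith
      then show ?thesis using that(3) by (intro above[OF that(1)]) linarith
    qed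
    have "\<sigma> z + \<epsilon> / 4 < \<sigma> z + \<epsilon> / 2" using \<epsilon> by simp
    from visc_sub_right_difference_le[OF sub w z01 r(1) slope_above this]
    obtain \<delta>\<^sub>w where \<delta>\<^sub>w: "0 < \<delta>\<^sub>w" "\<And>h. 0 < h \<Longrightarrow> h < \<delta>\<^sub>w \<Longrightarrow> w (z + h) - w z \<le> (\<sigma> z + \<epsilon> / 2) * h"
      by blast
    have "\<sigma> z - \<epsilon> / 2 < \<sigma> z" using \<epsilon> by simp
    from DERIV_right_difference_gt[OF W(2)[OF z01] this]
    obtain \<delta>\<^sub>W where \<delta>\<^sub>W: "0 < \<delta>\<^sub>W" "\<And>h. 0 < h \<Longrightarrow> h < \<delta>\<^sub>W \<Longrightarrow> (\<sigma> z - \<epsilon> / 2) * h < W (z + h) - W z"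
      by blast
    show "\<exists>\<delta>>0. \<forall>h. 0 < h \<longrightarrow> h < \<delta> \<longrightarrow> w (z + h) - W (z + h) \<le> w z - W z + \<epsilon> * h"
    proof (intro exI[of _ "min \<delta>\<^sub>w \<delta>\<^sub>W"] conjI allI impI)
      fix h assume h: "0 < h" "h < min \<delta>\<^sub>w \<delta>\<^sub>W"
      then have "(\<sigma> z - \<epsilon> / 2) * h < W (z + h) - W z" using \<delta>\<^sub>W(2) by simp
      moreover have "w (z + h) - w z \<le> (\<sigma> z + \<epsilon> / 2) * h" using \<delta>\<^sub>w(2) h by simp
      ultimately show "w (z + h) - W (z + h) \<le> w z - W z + \<epsilon> * h"
        by (simp add: algebra_simps)
    qed (use \<delta>\<^sub>w(1) \<delta>\<^sub>W(1) in simp)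
  qed
  then show ?thesis by simp
qed

lemma visc_sub_increment_ge:
  assumes sub: "visc_sub H a w" and w: "continuous_on {0..1} w"
    and \<sigma>: "continuous_on {0..1} \<sigma>"
    and W: "continuous_on {0..1} W" "\<And>x. x \<in> {0<..<1} \<Longrightarrow> (W has_real_derivative \<sigma> x) (at x)"
    and below: "\<And>s p. s \<in> {0..1} \<Longrightarrow> p < \<sigma> s \<Longrightarrow> a < H s p"
    and xy: "0 \<le> x" "x \<le> y" "y \<le> 1"
  shows "W y - W x \<le> w y - w x"
proof -
  have reflect: "continuous_on {0..1} (\<lambda>s. f (1 - s))" if "continuous_on {0..1} f" for f :: "real \<Rightarrow> real"
    by (rule continuous_on_compose2[OF that]) (auto intro!: continuous_intros)
  have "(\<lambda>s. w (1 - s)) (1 - x) - (\<lambda>s. w (1 - s)) (1 - y) \<le> (\<lambda>s. W (1 - s)) (1 - x) - (\<lambda>s. W (1 - s)) (1 - y)"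
  proof (rule visc_sub_increment_le[OF visc_sub_reflect[OF sub] reflect[OF w] reflect[OF \<sigma>, THEN continuous_on_minus] reflect[OF W(1)]])
    show "((\<lambda>s. W (1 - s)) has_real_derivative - \<sigma> (1 - s)) (at s)" if "s \<in> {0<..<1}" for s
    proof -
      have "(W has_real_derivative \<sigma> (1 - s)) (at (1 - s))" using W(2) that by simp
      from DERIV_chain2[OF this DERIV_diff[OF DERIV_const DERIV_ident]] show ?thesis by simp
    qed
    show "a < H (1 - s) (- p)" if "s \<in> {0..1}" "- \<sigma> (1 - s) < p" for s p
      using below[of "1 - s" "- p"] that by simp
  qed (use xy in auto)
  then show ?thesis by simp
qed

lemma visc_super_test_difference_antimono:
  assumes super: "visc_super H a w" and w: "continuous_on {0..1} w"
    and phi: "C1_open phi dphi" "continuous_on {0..1} phi"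
    and below: "\<And>x. x \<in> {0<..<1} \<Longrightarrow> H x (dphi x) < a"
    and xy: "0 < x" "x < y" "y \<le> 1" and dip: "w x - phi x < w 0 - phi 0"
  shows "w y - phi y \<le> w x - phi x"
proof (rule ccontr)
  assume rise: "\<not> ?thesis"
  have "continuous_on {0..y} (\<lambda>t. phi t - w t)"
    using xy by (intro continuous_intros continuous_on_subset[OF w] continuous_on_subset[OF phi(2)]) auto
  then obtain z where z: "z \<in> {0<..<y}" "\<And>t. t \<in> {0..y} \<Longrightarrow> phi t - w t \<le> phi z - w z"
    by (rule continuous_attains_sup_interior[where z = x]) (use xy rise dip in auto)
  have "a \<le> H z (dphi z)"
    by (rule visc_super_interval_min[OF super phi(1) _ _ z(1)]) (use xy z(2) in force)+
  then show False using below[of z] z(1) xy by auto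
qed

definition constrained_subtangent :: "(real \<Rightarrow> real) \<Rightarrow> (real \<Rightarrow> real) \<Rightarrow> (real \<Rightarrow> real) \<Rightarrow> bool" where
  "constrained_subtangent w phi dphi \<longleftrightarrow>
     C1_closed phi dphi \<and> phi 1 = w 1 \<and> (\<exists>\<delta>>0. \<forall>s\<in>{1-\<delta><..<1}. w s \<ge> phi s)"

lemma constrained_subtangent_slope_ge:
  assumes "constrained_subtangent w phi dphi" and w: "(w has_real_derivative D) (at 1 within {0..1})"
  shows "D \<le> dphi 1"
proof (rule ccontr)
  assume "\<not> D \<le> dphi 1"
  obtain \<delta> where \<delta>: "0 < \<delta>" "\<And>s. s \<in> {1-\<delta><..<1} \<Longrightarrow> phi s \<le> w s" and touch: "phi 1 = w 1"
    and phi: "(phi has_real_derivative dphi 1) (at 1 within {0..1})"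
    using assms(1) unfolding constrained_subtangent_def C1_closed_def by auto
  have "((\<lambda>s. w s - phi s) has_real_derivative D - dphi 1) (at 1 within {0..1})"
    by (rule DERIV_diff[OF w phi])
  moreover have "0 < D - dphi 1" using \<open>\<not> D \<le> dphi 1\<close> by simp
  ultimately obtain d where d: "0 < d"
    "\<forall>h>0. 1 - h \<in> {0..1} \<longrightarrow> h < d \<longrightarrow> w (1 - h) - phi (1 - h) < w 1 - phi 1"
    using has_real_derivative_pos_inc_left by blast
  define h where "h = min 1 (min d \<delta>) / 2"
  have h: "0 < h" "1 - h \<in> {0..1}" "h < d" "h < \<delta>"
    using d(1) \<delta>(1) unfolding h_def by (auto simp: min_def field_simps)
  have "w (1 - h) - phi (1 - h) < 0" using d(2) h touch by simp
  moreover have "phi (1 - h) \<le> w (1 - h)" using \<delta>(2)[of "1 - h"] h by simp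
  ultimately show False by simp
qed

lemma linear_constrained_subtangent:
  assumes W: "(W has_real_derivative \<sigma>) (at 1 within {0..1})" and \<epsilon>: "0 < \<epsilon>" and "t0 < 1"
    and above: "\<And>s. t0 < s \<Longrightarrow> s < 1 \<Longrightarrow> W s - W 1 + \<epsilon> * (1 - s) \<le> w s - w 1"
  shows "constrained_subtangent w (\<lambda>s. w 1 + (\<sigma> - \<epsilon> / 2) * (s - 1)) (\<lambda>_. \<sigma> - \<epsilon> / 2)"
  unfolding constrained_subtangent_def C1_closed_def
proof (intro conjI ballI)
  show "((\<lambda>s. w 1 + (\<sigma> - \<epsilon> / 2) * (s - 1)) has_real_derivative \<sigma> - \<epsilon> / 2) (at x within {0..1})" for x
    by (auto intro!: derivative_eq_intros)
  have "((\<lambda>s. W s - (\<sigma> + \<epsilon> / 2) * s) has_real_derivative - \<epsilon> / 2) (at 1 within {0..1})"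
    using W by (auto intro!: derivative_eq_intros)
  moreover have "- \<epsilon> / 2 < 0" using \<epsilon> by simp
  ultimately obtain d where d: "0 < d" "\<forall>h>0. 1 - h \<in> {0..1} \<longrightarrow> h < d \<longrightarrow>
      W 1 - (\<sigma> + \<epsilon> / 2) * 1 < W (1 - h) - (\<sigma> + \<epsilon> / 2) * (1 - h)"
    using has_real_derivative_neg_dec_left by blast
  show "\<exists>\<delta>>0. \<forall>s\<in>{1 - \<delta><..<1}. w 1 + (\<sigma> - \<epsilon> / 2) * (s - 1) \<le> w s"
  proof (intro exI[of _ "min d (min 1 (1 - t0))"] conjI ballI)
    fix s assume s: "s \<in> {1 - min d (min 1 (1 - t0))<..<1}"
    then have "W 1 - (\<sigma> + \<epsilon> / 2) * 1 < W (1 - (1 - s)) - (\<sigma> + \<epsilon> / 2) * (1 - (1 - s))"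
      using d(2) by (intro d(2)[rule_format]) auto
    then have "(\<sigma> + \<epsilon> / 2) * (s - 1) < W s - W 1" by (simp add: field_simps)
    moreover have "W s - W 1 + \<epsilon> * (1 - s) \<le> w s - w 1" using above s by auto
    moreover have "(\<sigma> - \<epsilon> / 2) * (s - 1) = (\<sigma> + \<epsilon> / 2) * (s - 1) + \<epsilon> * (1 - s)"
      by (simp add: algebra_simps)
    ultimately show "w 1 + (\<sigma> - \<epsilon> / 2) * (s - 1) \<le> w s" by linarith
  qed (use d(1) \<open>t0 < 1\<close> in auto)
qed auto

lemma continuous_on_drop_interior:
  fixes G :: "real \<Rightarrow> real"
  assumes "continuous_on {0..1} G" and "G 1 < G 0"
  obtains t where "0 < t" "t < 1" "G t < G 0"
proof -
  obtain t where "0 \<le> t" "t \<le> 1" "G t = (G 0 + G 1) / 2"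
    using IVT2'[of G 1 "(G 0 + G 1) / 2" 0] assms by auto
  then show thesis using assms(2) by (intro that[of t]) (auto intro!: le_neq_trans)
qed

lemma visc_super_increment_eq:
  assumes super: "visc_super H a w" and w: "continuous_on {0..1} w"
    and \<sigma>: "continuous_on {0..1} \<sigma>"
    and W: "\<And>x. x \<in> {0..1} \<Longrightarrow> (W has_real_derivative \<sigma> x) (at x within {0..1})"
    and gap: "0 < \<eta>" "\<And>s p. s \<in> {0..1} \<Longrightarrow> \<sigma> s - \<eta> < p \<Longrightarrow> p < \<sigma> s \<Longrightarrow> H s p < a"
    and increment_le: "\<And>x y. 0 \<le> x \<Longrightarrow> x \<le> y \<Longrightarrow> y \<le> 1 \<Longrightarrow> w y - w x \<le> W y - W x"
    and subtangents: "\<And>phi dphi. constrained_subtangent w phi dphi \<Longrightarrow> a \<le> H 1 (dphi 1)"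
  shows "w 1 - w 0 = W 1 - W 0"
proof (rule ccontr)
  define G where "G x = w x - W x" for x
  have Wc: "continuous_on {0..1} W" using W by (rule DERIV_continuous_on)
  assume "w 1 - w 0 \<noteq> W 1 - W 0"
  have "continuous_on {0..1} G" unfolding G_def using w Wc by (intro continuous_intros)
  moreover have "G 1 < G 0" using \<open>w 1 - w 0 \<noteq> W 1 - W 0\<close> increment_le[of 0 1] unfolding G_def by simp
  ultimately obtain t0 where t0: "0 < t0" "t0 < 1" "G t0 < G 0"
    by (rule continuous_on_drop_interior)
  define \<epsilon> where "\<epsilon> = min \<eta> (G 0 - G t0) / 2"
  have \<epsilon>: "0 < \<epsilon>" "\<epsilon> < \<eta>" "\<epsilon> < G 0 - G t0" using gap(1) t0(3) unfolding \<epsilon>_def by auto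
  \<comment> \<open>The slope \<open>\<sigma> - \<epsilon>\<close> of this test function lies where \<open>H < a\<close>, so \<open>w - W + \<epsilon>x\<close> has no interior
    minimum and cannot rise again once it is below its value at \<open>0\<close>.\<close>
  have C1: "C1_open (\<lambda>x. W x - \<epsilon> * x) (\<lambda>x. \<sigma> x - \<epsilon>)"
    unfolding C1_open_def
  proof (intro conjI ballI)
    fix x :: real assume "x \<in> {0<..<1}"
    then have "(W has_real_derivative \<sigma> x) (at x)" using W[of x] at_within_Icc_at[of 0 x 1] by auto
    then show "((\<lambda>x. W x - \<epsilon> * x) has_real_derivative \<sigma> x - \<epsilon>) (at x)"
      by (auto intro!: derivative_eq_intros)
  qed (auto intro!: continuous_intros continuous_on_subset[OF \<sigma>])
  have "W s - W 1 + \<epsilon> * (1 - s) \<le> w s - w 1" if s: "t0 < s" "s < 1" for s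
  proof -
    have "G s \<le> G t0" using increment_le[of t0 s] s t0 unfolding G_def by simp
    moreover have "\<epsilon> * s \<le> \<epsilon>" using \<epsilon>(1) s by (simp add: mult_left_le)
    ultimately have dip: "w s - (W s - \<epsilon> * s) < w 0 - (W 0 - \<epsilon> * 0)"
      using \<epsilon>(3) unfolding G_def by simp
    have "continuous_on {0..1} (\<lambda>x. W x - \<epsilon> * x)" by (intro continuous_intros Wc)
    moreover have "H x (\<sigma> x - \<epsilon>) < a" if "x \<in> {0<..<1}" for x
      using gap(2)[of x "\<sigma> x - \<epsilon>"] that \<epsilon> by simp
    ultimately have "w 1 - (W 1 - \<epsilon> * 1) \<le> w s - (W s - \<epsilon> * s)"
      by (intro visc_super_test_difference_antimono[OF super w C1]) (use s t0 dip in auto)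
    then show ?thesis by (simp add: algebra_simps)
  qed
  from linear_constrained_subtangent[OF W[of 1] \<epsilon>(1) t0(2) this]
  have "a \<le> H 1 (\<sigma> 1 - \<epsilon> / 2)" by (rule subtangents) simp
  moreover have "H 1 (\<sigma> 1 - \<epsilon> / 2) < a" using gap(2)[of 1] \<epsilon> by simp
  ultimately show False by simp
qed

context hamiltonian
begin

context
  fixes a :: real
  assumes levels: "(\<forall>s\<in>{0..1}. minH H s < a) \<or> (\<forall>s\<in>{0..1}. minH H s = a)"
begin

lemma admissible_level: "s \<in> {0..1} \<Longrightarrow> minH H s \<le> a"
  using levels by fastforce

lemma sigma_plus_continuous_under_levels: "continuous_on {0..1} (sigma_plus H a)"
  using sigma_plus_continuous[OF admissible_level levels] .

lemma primitive_sigma_plus: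
  defines "W \<equiv> \<lambda>x. integral {0..x} (sigma_plus H a)"
  shows "\<And>x. x \<in> {0..1} \<Longrightarrow> (W has_real_derivative sigma_plus H a x) (at x within {0..1})"
    and "\<And>x. x \<in> {0<..<1} \<Longrightarrow> (W has_real_derivative sigma_plus H a x) (at x)"
    and "continuous_on {0..1} W"
proof -
  show W: "(W has_real_derivative sigma_plus H a x) (at x within {0..1})" if "x \<in> {0..1}" for x
    unfolding W_def by (rule integral_has_real_derivative[OF sigma_plus_continuous_under_levels that])
  show "(W has_real_derivative sigma_plus H a x) (at x)" if "x \<in> {0<..<1}" for x
    using W[of x] that at_within_Icc_at[of 0 x 1] by auto
  show "continuous_on {0..1} W" using W by (rule DERIV_continuous_on)
qed

lemma visc_sub_increment_le_integral:
  assumes "visc_sub H a w" "continuous_on {0..1} w" "0 \<le> x" "x \<le> y" "y \<le> 1"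
  shows "w y - w x \<le> integral {0..y} (sigma_plus H a) - integral {0..x} (sigma_plus H a)"
proof (rule visc_sub_increment_le[OF assms(1,2) sigma_plus_continuous_under_levels primitive_sigma_plus(3,2) _ assms(3-5)])
  show "a < H s p" if "s \<in> {0..1}" "sigma_plus H a s < p" for s p
    using H_greater_above_sigma_plus[OF that(1) admissible_level[OF that(1)] that(2)] .
qed

lemma subtangent_condition_if_maximal:
  assumes maximal: "\<forall>s\<in>{0..1}. w s = w 0 + integral {0..s} (sigma_plus H a)"
    and subtangent: "constrained_subtangent w phi dphi"
  shows "a \<le> H 1 (dphi 1)"
proof -
  have "((\<lambda>s. w 0 + integral {0..s} (sigma_plus H a)) has_real_derivative sigma_plus H a 1)
      (at 1 within {0..1})"
    using DERIV_add[OF DERIV_const primitive_sigma_plus(1)[of 1]] by simp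
  then have "(w has_real_derivative sigma_plus H a 1) (at 1 within {0..1})"
    by (rule has_field_derivative_transform_within[where d = 1]) (auto simp: maximal[rule_format, symmetric])
  from constrained_subtangent_slope_ge[OF subtangent this]
  show ?thesis using H_ge_at_or_above_sigma_plus[of 1 a "dphi 1"] admissible_level[of 1] by simp
qed

lemma maximal_if_subtangent_condition:
  assumes sol: "visc_sol H a w" and w: "continuous_on {0..1} w"
    and subtangents: "\<And>phi dphi. constrained_subtangent w phi dphi \<Longrightarrow> a \<le> H 1 (dphi 1)"
  shows "\<forall>s\<in>{0..1}. w s = w 0 + integral {0..s} (sigma_plus H a)"
proof -
  define W where "W x = integral {0..x} (sigma_plus H a)" for x
  note W = primitive_sigma_plus[folded W_def[abs_def]]
  have sub: "visc_sub H a w" and super: "visc_super H a w" using sol unfolding visc_sol_def by auto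
  have increment_le: "w y - w x \<le> W y - W x" if "0 \<le> x" "x \<le> y" "y \<le> 1" for x y
    unfolding W_def using visc_sub_increment_le_integral[OF sub w that] .
  have "w s - w 0 = W s - W 0" if s: "s \<in> {0..1}" for s
  proof -
    from levels have "w 1 - w 0 = W 1 - W 0 \<or> W s - W 0 \<le> w s - w 0"
    proof
      assume "\<forall>s\<in>{0..1}. minH H s < a"
      then obtain \<eta> where gap: "0 < \<eta>"
        "\<And>s p. s \<in> {0..1} \<Longrightarrow> sigma_plus H a s - \<eta> < p \<Longrightarrow> p < sigma_plus H a s \<Longrightarrow> H s p < a"
        using uniform_gap_below_sigma_plus by blast
      have "w 1 - w 0 = W 1 - W 0"
        by (rule visc_super_increment_eq[OF super w sigma_plus_continuous_under_levels W(1) gap increment_le])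
          (use subtangents in blast)+
      then show ?thesis ..
    next
      assume "\<forall>s\<in>{0..1}. minH H s = a"
      then have "a < H s p" if "s \<in> {0..1}" "p < sigma_plus H a s" for s p
        using H_greater_below_sigma_plus_degenerate that by blast
      from visc_sub_increment_ge[OF sub w sigma_plus_continuous_under_levels W(3,2) this] s
      have "W s - W 0 \<le> w s - w 0" by simp
      then show ?thesis ..
    qed
    moreover have "w s - w 0 \<le> W s - W 0" "w 1 - w s \<le> W 1 - W s"
      using s by (intro increment_le; simp)+
    ultimately show ?thesis by linarith
  qed
  moreover have "W 0 = 0" by (simp add: W_def)
  ultimately show ?thesis unfolding W_def by (metis add.commute diff_eq_eq diff_zero)
qed

end

end

theorem proposition5p3:
  fixes H :: "real \<Rightarrow> real \<Rightarrow> real" and a :: real and w :: "real \<Rightarrow> real"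
  assumes H_cont: "continuous_on ({0..1} \<times> UNIV) (\<lambda>(s, p). H s p)"
    and H_coercive: "\<forall>M. \<exists>R. \<forall>s\<in>{0..1}. \<forall>p. \<bar>p\<bar> \<ge> R \<longrightarrow> H s p \<ge> M"
    and H_qconv: "\<forall>s\<in>{0..1}. \<forall>b. convex {p. H s p \<le> b}"
    and H_int: "\<forall>s\<in>{0..1}. \<forall>b. interior {p. H s p \<le> b} = {p. H s p < b}"
    and a_ge: "a \<ge> aH H"
    and a_eq: "a = aH H \<longrightarrow> (\<exists>c. \<forall>s\<in>{0..1}. minH H s = c)"
    and w_cont: "continuous_on {0..1} w"
    and w_sol: "visc_sol H a w"
  shows "(\<forall>phi dphi. C1_closed phi dphi \<and> phi 1 = w 1 \<and>
             (\<exists>\<delta>>0. \<forall>s\<in>{1-\<delta><..<1}. w s \<ge> phi s) \<longrightarrow> H 1 (dphi 1) \<ge> a)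
         \<longleftrightarrow> (\<forall>s\<in>{0..1}. w s = w 0 + integral {0..s} (sigma_plus H a))"
proof -
  interpret hamiltonian H using H_cont H_coercive H_qconv H_int by unfold_locales auto
  have levels: "(\<forall>s\<in>{0..1}. minH H s < a) \<or> (\<forall>s\<in>{0..1}. minH H s = a)"
    using level_cases a_ge a_eq by blast
  show ?thesis
    unfolding constrained_subtangent_def[symmetric]
    using subtangent_condition_if_maximal[OF levels] maximal_if_subtangent_condition[OF levels w_sol w_cont]
    by blast
qed

end
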